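(* Every classically perfect positive definite matrix $Q\in\mathcal{S}^n_{>0}$ is arithmetically equivalent to a perfect copositive matrix: there exists $U\in\mathrm{GL}_n(\mathbb{Z})$ such that $U^\top QU$ is perfect copositive.
   Context: $\mathcal{S}^n$: real symmetric $n\times n$ matrices, $\mathcal{S}^n_{>0}$ the positive definite ones; $B[v]=v^\top Bv$. Classical notions: $\min Q=\min\{Q[v]: v\in\mathbb{Z}^n\setminus\{0\}\}$, $\operatorname{Min}Q=\{v\in\mathbb{Z}^n: Q[v]=\min Q\}$; a positive definite $Q$ is classically perfect if it is the unique $Q'\in\mathcal{S}^n$ with $Q'[v]=\min Q$ for all $v\in\operatorname{Min}Q$. Two symmetric matrices $Q_1,Q_2$ are arithmetically equivalent if $Q_2=U^\top Q_1U$ for some $U\in\mathrm{GL}_n(\mathbb{Z})$. Copositive notions: $\mathcal{COP}^n=\{B\in\mathcal{S}^n: B[x]\ge0\ \forall x\in\mathbb{R}^n_{\ge0}\}$; strictly copositive means lying in its interior; $\min_{\mathcal{COP}}B=\inf\{B[v]: v\in\mathbb{Z}^n_{\ge0}\setminus\{0\}\}$, $\operatorname{Min}_{\mathcal{COP}}B=\{v\in\mathbb{Z}^n_{\ge0}: B[v]=\min_{\mathcal{COP}}B\}$; a strictly copositive $P$ is perfect copositive if it is the unique $Q\in\mathcal{S}^n$ with $Q[v]=\min_{\mathcal{COP}}P$ for all $v\in\operatorname{Min}_{\mathcal{COP}}P$. *)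

theory Defs
  imports "HOL-Analysis.Analysis"
begin

text \<open>Dimension n is the cardinality of the finite index type 'n.
  Matrices are real ^'n^'n, vectors real ^'n.\<close>

definition symmetric_mat :: "real^'n^'n \<Rightarrow> bool" where
  "symmetric_mat B \<longleftrightarrow> transpose B = B"

definition qform :: "real^'n^'n \<Rightarrow> real^'n \<Rightarrow> real" where
  "qform B v = v \<bullet> (B *v v)"

definition int_vec :: "real^'n \<Rightarrow> bool" where
  "int_vec v \<longleftrightarrow> (\<forall>i. v $ i \<in> \<int>)"

definition nonneg_vec :: "real^'n \<Rightarrow> bool" where
  "nonneg_vec v \<longleftrightarrow> (\<forall>i. v $ i \<ge> 0)"

definition int_mat :: "real^'n^'m \<Rightarrow> bool" where
  "int_mat U \<longleftrightarrow> (\<forall>i j. U $ i $ j \<in> \<int>)"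

definition GL_Z :: "real^'n^'n \<Rightarrow> bool" where
  "GL_Z U \<longleftrightarrow> int_mat U \<and> invertible U \<and> int_mat (matrix_inv U)"

definition pos_def :: "real^'n^'n \<Rightarrow> bool" where
  "pos_def Q \<longleftrightarrow> symmetric_mat Q \<and> (\<forall>x. x \<noteq> 0 \<longrightarrow> qform Q x > 0)"

definition min_class :: "real^'n^'n \<Rightarrow> real" where
  "min_class Q = Inf {qform Q v | v. int_vec v \<and> v \<noteq> 0}"

definition Min_class :: "real^'n^'n \<Rightarrow> (real^'n) set" where
  "Min_class Q = {v. int_vec v \<and> qform Q v = min_class Q}"

definition classically_perfect :: "real^'n^'n \<Rightarrow> bool" where
  "classically_perfect Q \<longleftrightarrow> pos_def Q \<and>
     (\<forall>Q'. symmetric_mat Q' \<and> (\<forall>v\<in>Min_class Q. qform Q' v = min_class Q) \<longrightarrow> Q' = Q)"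

definition copositive :: "real^'n^'n \<Rightarrow> bool" where
  "copositive B \<longleftrightarrow> symmetric_mat B \<and> (\<forall>x. nonneg_vec x \<longrightarrow> qform B x \<ge> 0)"

text \<open>Strictly copositive: interior of COP^n, relative to the space S^n of symmetric matrices.\<close>
definition strictly_copositive :: "real^'n^'n \<Rightarrow> bool" where
  "strictly_copositive B \<longleftrightarrow> copositive B \<and>
     (\<exists>e>0. \<forall>C. symmetric_mat C \<and> norm (C - B) < e \<longrightarrow> copositive C)"

definition min_COP :: "real^'n^'n \<Rightarrow> real" where
  "min_COP B = Inf {qform B v | v. int_vec v \<and> nonneg_vec v \<and> v \<noteq> 0}"

definition Min_COP :: "real^'n^'n \<Rightarrow> (real^'n) set" where
  "Min_COP B = {v. int_vec v \<and> nonneg_vec v \<and> qform B v = min_COP B}"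

definition perfect_copositive :: "real^'n^'n \<Rightarrow> bool" where
  "perfect_copositive P \<longleftrightarrow> strictly_copositive P \<and>
     (\<forall>Q. symmetric_mat Q \<and> (\<forall>v\<in>Min_COP P. qform Q v = min_COP P) \<longrightarrow> Q = P)"

end

theory Submission
  imports Defs
begin

text \<open>
  Let \<open>m\<close> be the minimum of the perfect form \<open>Q\<close>. Its minimal vectors have bounded
  coordinates, say \<open>|v\<^sub>j| < N\<close> for an integer \<open>N\<close>. Order the coordinates and let \<open>V\<close> be
  the unimodular lower triangular matrix with entries \<open>N\<^sup>i\<^sup>-\<^sup>j\<close>: then every coordinate of
  \<open>V v\<close> is a number written in base \<open>N\<close> with the "digits" \<open>v\<^sub>j\<close>, and since the digits
  are smaller than the base, all these numbers have the sign of their leading nonzero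
  digit. Hence \<open>V\<close> maps every minimal vector of \<open>Q\<close> into \<open>\<plusminus>\<real>\<^sup>n\<^sub>\<ge>\<^sub>0\<close>. For
  \<open>U = V\<^sup>-\<^sup>1\<close> the form \<open>P = U\<^sup>T Q U\<close> is positive definite, hence strictly copositive,
  its copositive minimum is again \<open>m\<close>, and its copositive minimal vectors include
  \<open>\<plusminus>V v\<close> for all minimal vectors \<open>v\<close> of \<open>Q\<close>. Any symmetric \<open>R\<close> that is constant \<open>m\<close> on
  them therefore gives a form \<open>V\<^sup>T R V\<close> that is constant \<open>m\<close> on \<open>Min Q\<close>, so
  \<open>V\<^sup>T R V = Q\<close> by perfection of \<open>Q\<close>, i.e. \<open>R = P\<close>.
\<close>

lemma qform_zero [simp]: "qform A 0 = 0"
  unfolding qform_def by simp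

lemma qform_scaleR: "qform A (c *\<^sub>R x) = c\<^sup>2 * qform A x"
  unfolding qform_def by (simp add: matrix_vector_mult_scaleR power2_eq_square)

lemma qform_uminus [simp]: "qform A (- x) = qform A x"
  using qform_scaleR[of A "-1" x] by simp

lemma qform_diff: "qform (C - B) x = qform C x - qform B x"
  unfolding qform_def by (simp add: matrix_vector_mult_diff_rdistrib inner_diff_right)

lemma qform_congruence: "qform (transpose U ** Q ** U) x = qform Q (U *v x)"
proof -
  have "x \<bullet> (transpose U *v y) = (U *v x) \<bullet> y" for y
    by (metis dot_lmul_matrix inner_commute transpose_matrix_vector)
  then show ?thesis
    by (simp add: qform_def matrix_vector_mul_assoc[symmetric])
qed

lemma qform_scaleR_mat: "qform (c *\<^sub>R A) x = c * qform A x"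
  by (simp add: qform_def flip: scaleR_matrix_vector_assoc)

lemma continuous_on_qform: "continuous_on S (qform A)"
  unfolding qform_def by (intro continuous_intros linear_continuous_on) auto

lemma symmetric_mat_congruence:
  "symmetric_mat Q \<Longrightarrow> symmetric_mat (transpose U ** Q ** U)"
  by (simp add: symmetric_mat_def matrix_transpose_mul matrix_mul_assoc)

lemma abs_qform_le: "\<bar>qform D x\<bar> \<le> real CARD('n) * norm D * (norm x)\<^sup>2"
  for D :: "real^'n^'n"
proof -
  have "norm (D *v x) \<le> (\<Sum>i\<in>UNIV. \<bar>(D *v x) $ i\<bar>)"
    by (rule norm_le_l1_cart)
  also have "\<dots> \<le> (\<Sum>i\<in>(UNIV::'n set). norm D * norm x)"
  proof (rule sum_mono)
    fix i
    have "\<bar>(D *v x) $ i\<bar> \<le> norm (D $ i) * norm x"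
      unfolding matrix_vector_mul_component by (rule Cauchy_Schwarz_ineq2)
    also have "\<dots> \<le> norm D * norm x"
      by (intro mult_right_mono Finite_Cartesian_Product.norm_nth_le) auto
    finally show "\<bar>(D *v x) $ i\<bar> \<le> norm D * norm x" .
  qed
  finally have "norm x * norm (D *v x) \<le> norm x * (real CARD('n) * norm D * norm x)"
    by (intro mult_left_mono) auto
  moreover have "\<bar>qform D x\<bar> \<le> norm x * norm (D *v x)"
    unfolding qform_def by (rule Cauchy_Schwarz_ineq2)
  ultimately show ?thesis
    by (simp add: power2_eq_square algebra_simps)
qed

lemma pos_def_qform_ge_norm:
  fixes A :: "real^'n^'n"
  assumes "pos_def A"
  obtains c where "c > 0" "\<And>x. c * (norm x)\<^sup>2 \<le> qform A x"
proof -
  have "sphere (0::real^'n) 1 \<noteq> {}"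
    using norm_axis_1 by (metis mem_sphere_0 empty_iff)
  then obtain x0 where x0: "x0 \<in> sphere 0 1" "\<And>y. y \<in> sphere 0 1 \<Longrightarrow> qform A x0 \<le> qform A y"
    using continuous_attains_inf[OF compact_sphere _ continuous_on_qform] by blast
  have "x0 \<noteq> 0"
    using x0(1) by auto
  then have "qform A x0 > 0"
    using assms by (simp add: pos_def_def)
  moreover have "qform A x0 * (norm x)\<^sup>2 \<le> qform A x" for x
  proof (cases "x = 0")
    case False
    then have "qform A x0 \<le> qform A ((1 / norm x) *\<^sub>R x)"
      using x0(2) by simp
    also have "\<dots> = qform A x / (norm x)\<^sup>2"
      by (simp add: qform_scaleR power_divide)
    finally show ?thesis
      using False by (simp add: field_simps)
  qed simp
  ultimately show ?thesis
    using that by blast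
qed

lemma pos_def_bounded_sublevel:
  fixes A :: "real^'n^'n"
  assumes "pos_def A"
  obtains B where "\<And>x. qform A x \<le> r \<Longrightarrow> norm x \<le> B"
proof -
  obtain c where c: "c > 0" "\<And>x. c * (norm x)\<^sup>2 \<le> qform A x"
    using pos_def_qform_ge_norm[OF assms] by blast
  have "norm x \<le> sqrt (r / c)" if "qform A x \<le> r" for x
  proof -
    have "c * (norm x)\<^sup>2 \<le> r"
      using c(2)[of x] that by linarith
    then have "(norm x)\<^sup>2 \<le> r / c"
      using c(1) by (simp add: pos_le_divide_eq mult.commute)
    then show ?thesis
      using real_le_rsqrt by blast
  qed
  then show ?thesis
    using that by blast
qed

lemma pos_def_imp_strictly_copositive:
  fixes P :: "real^'n^'n"
  assumes "pos_def P"
  shows "strictly_copositive P"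
proof -
  obtain c where c: "c > 0" "\<And>x. c * (norm x)\<^sup>2 \<le> qform P x"
    using pos_def_qform_ge_norm[OF assms] by blast
  have close_copositive: "copositive C"
    if "symmetric_mat C" "norm (C - P) < c / real CARD('n)" for C :: "real^'n^'n"
  proof -
    have "qform C x \<ge> 0" for x
    proof -
      have "real CARD('n) * norm (C - P) * (norm x)\<^sup>2 \<le> c * (norm x)\<^sup>2"
        using that(2) by (intro mult_right_mono) (auto simp: field_simps)
      then show ?thesis
        using abs_qform_le[of "C - P" x] c(2)[of x] by (simp add: qform_diff)
    qed
    then show ?thesis
      using that(1) by (simp add: copositive_def)
  qed
  have "c / real CARD('n) > 0"
    using c(1) by simp
  moreover have "copositive P"
    using close_copositive[of P] assms c(1) by (simp add: pos_def_def)
  ultimately show ?thesis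
    unfolding strictly_copositive_def using close_copositive by blast
qed

lemma pos_def_congruence:
  assumes "pos_def Q" "invertible U"
  shows "pos_def (transpose U ** Q ** U)"
proof -
  have "U *v x \<noteq> 0" if "x \<noteq> 0" for x
    using assms(2) that
    by (metis invertible_def matrix_vector_mul_assoc matrix_vector_mul_lid matrix_vector_mult_0_right)
  then show ?thesis
    using assms(1) by (simp add: pos_def_def qform_congruence symmetric_mat_congruence)
qed

lemma pos_def_qform_nonneg: "pos_def Q \<Longrightarrow> qform Q x \<ge> 0"
  by (cases "x = 0") (auto simp: pos_def_def less_imp_le)

lemma min_class_le:
  assumes "pos_def Q" "int_vec v" "v \<noteq> 0"
  shows "min_class Q \<le> qform Q v"
  unfolding min_class_def
  using assms pos_def_qform_nonneg[OF assms(1)]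
  by (intro cInf_lower) (auto intro: bdd_belowI[of _ 0])

lemma classically_perfect_imp_pos_def: "classically_perfect Q \<Longrightarrow> pos_def Q"
  by (simp add: classically_perfect_def)

text \<open>If the minimum were not attained by a nonzero vector, \<open>2 Q\<close> would satisfy the
  defining equations of \<open>Q\<close> as well.\<close>
lemma classically_perfect_min_class:
  assumes "classically_perfect Q"
  shows "Min_class Q \<noteq> {}" "min_class Q > 0"
proof -
  have pd: "pos_def Q" and
    perfect: "\<And>Q'. symmetric_mat Q' \<Longrightarrow> \<forall>v\<in>Min_class Q. qform Q' v = min_class Q \<Longrightarrow> Q' = Q"
    using assms unfolding classically_perfect_def by blast+
  have attained: "Min_class Q \<noteq> {} \<and> min_class Q \<noteq> 0"
  proof (rule ccontr)
    assume "\<not> ?thesis"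
    then have "\<forall>v\<in>Min_class Q. qform (2 *\<^sub>R Q) v = min_class Q"
      by (auto simp: Min_class_def qform_scaleR_mat)
    moreover have "symmetric_mat (2 *\<^sub>R Q)"
      using pd by (simp add: pos_def_def symmetric_mat_def transpose_scalar)
    ultimately have "Q = 0"
      using perfect by (metis scaleR_2 add_cancel_left_left)
    moreover have "qform Q (axis undefined 1) > 0"
      using pd by (simp add: pos_def_def axis_eq_0_iff)
    ultimately show False
      by (simp add: qform_def)
  qed
  then show "Min_class Q \<noteq> {}"
    by simp
  then obtain v where "qform Q v = min_class Q"
    by (auto simp: Min_class_def)
  then show "min_class Q > 0"
    using attained pos_def_qform_nonneg[OF pd, of v] by simp
qed

lemma int_vec_matrix_vector_mult: "int_mat U \<Longrightarrow> int_vec v \<Longrightarrow> int_vec (U *v v)"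
  unfolding int_mat_def int_vec_def matrix_vector_mult_def
  by (auto intro!: Ints_sum Ints_mult)

lemma int_vec_uminus: "int_vec v \<Longrightarrow> int_vec (- v)"
  unfolding int_vec_def by auto

lemma GL_Z_if_int_inverse:
  fixes U V :: "real^'n^'n"
  assumes "U ** V = mat 1" "int_mat U" "int_mat V"
  shows "GL_Z U"
proof -
  have VU: "V ** U = mat 1"
    using assms(1) matrix_left_right_inverse by blast
  then have inv: "invertible U"
    using assms(1) invertible_def by blast
  have "U ** matrix_inv U = mat 1 \<and> matrix_inv U ** U = mat 1"
    unfolding matrix_inv_def by (rule someI[of _ V]) (use assms(1) VU in blast)
  then have "matrix_inv U ** U = mat 1"
    by blast
  then have "matrix_inv U = V"
    by (metis assms(1) matrix_mul_assoc matrix_mul_lid matrix_mul_rid)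
  then show ?thesis
    using assms inv by (simp add: GL_Z_def)
qed

definition radix_sum :: "real \<Rightarrow> (nat \<Rightarrow> real) \<Rightarrow> nat \<Rightarrow> real" where
  "radix_sum N x k = (\<Sum>t\<le>k. N ^ (k - t) * x t)"

lemma radix_sum_Suc: "radix_sum N x (Suc k) = N * radix_sum N x k + x (Suc k)"
proof -
  have "(\<Sum>t\<le>k. N ^ (Suc k - t) * x t) = (\<Sum>t\<le>k. N * (N ^ (k - t) * x t))"
    by (intro sum.cong refl) (simp add: Suc_diff_le)
  then show ?thesis
    by (simp add: radix_sum_def sum_distrib_left)
qed

lemma radix_sum_uminus: "radix_sum N (\<lambda>t. - x t) k = - radix_sum N x k"
  by (simp add: radix_sum_def sum_negf)

lemma radix_sum_Ints: "N \<in> \<int> \<Longrightarrow> (\<And>t. x t \<in> \<int>) \<Longrightarrow> radix_sum N x k \<in> \<int>"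
  unfolding radix_sum_def by (intro Ints_sum Ints_mult Ints_power) auto

lemma radix_sum_pos_Suc:
  assumes "N \<in> \<int>" "\<And>t. x t \<in> \<int>" "\<And>t. \<bar>x t\<bar> < N" "radix_sum N x k > 0"
  shows "radix_sum N x (Suc k) > 0"
proof -
  have "radix_sum N x k \<in> \<int>"
    using assms(1,2) by (rule radix_sum_Ints)
  then have "radix_sum N x k \<ge> 1"
    using Ints_nonzero_abs_ge1 assms(4) by force
  moreover have "N > 0"
    using assms(3)[of 0] by linarith
  ultimately have "N * radix_sum N x k \<ge> N"
    by simp
  then show ?thesis
    using assms(3)[of "Suc k"] by (simp add: radix_sum_Suc)
qed

lemma radix_sum_pos_mono:
  assumes "N \<in> \<int>" "\<And>t. x t \<in> \<int>" "\<And>t. \<bar>x t\<bar> < N" "radix_sum N x j > 0" "j \<le> k"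
  shows "radix_sum N x k > 0"
  using assms(5,4) by (induction k rule: dec_induct) (auto intro: radix_sum_pos_Suc[OF assms(1-3)])

lemma radix_sum_same_sign:
  assumes "N \<in> \<int>" "\<And>t. x t \<in> \<int>" "\<And>t. \<bar>x t\<bar> < N"
  shows "(\<forall>t\<le>k. radix_sum N x t \<ge> 0) \<or> (\<forall>t\<le>k. radix_sum N x t \<le> 0)"
proof (rule ccontr)
  assume "\<not> ?thesis"
  then obtain s t where "s \<le> k" "radix_sum N x s < 0" "t \<le> k" "radix_sum N x t > 0"
    by (auto simp: not_le)
  then have "radix_sum N x k > 0" "radix_sum N (\<lambda>t. - x t) k > 0"
    using assms radix_sum_pos_mono[of N "\<lambda>t. - x t"]
    by (auto simp: radix_sum_uminus intro: radix_sum_pos_mono[of N x])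
  then show False
    by (simp add: radix_sum_uminus)
qed

text \<open>The bijection \<open>\<iota>\<close> onto \<open>{..<n}\<close> orders the coordinates; in that order
  \<open>radix_mat N \<iota>\<close> is \<open>(N\<^sup>i\<^sup>-\<^sup>j)\<^sub>i\<^sub>\<ge>\<^sub>j\<close>.\<close>
definition radix_mat :: "real \<Rightarrow> ('n \<Rightarrow> nat) \<Rightarrow> real^'n^'n" where
  "radix_mat N \<iota> = (\<chi> i j. if \<iota> j \<le> \<iota> i then N ^ (\<iota> i - \<iota> j) else 0)"

definition radix_mat_inverse :: "real \<Rightarrow> ('n \<Rightarrow> nat) \<Rightarrow> real^'n^'n" where
  "radix_mat_inverse N \<iota> = (\<chi> i j. (if i = j then 1 else 0) - (if \<iota> i = Suc (\<iota> j) then N else 0))"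

lemma int_mat_radix_mat: "N \<in> \<int> \<Longrightarrow> int_mat (radix_mat N \<iota>)"
  by (simp add: int_mat_def radix_mat_def)

lemma int_mat_radix_mat_inverse: "N \<in> \<int> \<Longrightarrow> int_mat (radix_mat_inverse N \<iota>)"
  by (simp add: int_mat_def radix_mat_inverse_def)

lemma radix_mat_inverse_mult:
  fixes \<iota> :: "'n::finite \<Rightarrow> nat"
  assumes \<iota>: "bij_betw \<iota> UNIV {..<CARD('n)}"
  shows "radix_mat_inverse N \<iota> ** radix_mat N \<iota> = mat 1"
proof -
  define V where "V = radix_mat N \<iota>"
  have inj: "\<iota> i = \<iota> j \<longleftrightarrow> i = j" for i j
    using \<iota> by (auto simp: bij_betw_def inj_eq)
  have "(radix_mat_inverse N \<iota> ** V) $ i $ l = V $ i $ l - N * (\<Sum>j | \<iota> i = Suc (\<iota> j). V $ j $ l)"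
    for i l
    by (simp add: radix_mat_inverse_def matrix_matrix_mult_def left_diff_distrib sum_subtractf
        sum_distrib_left sum.If_cases if_distrib[of "\<lambda>x. x * _"] cong: if_cong)
  moreover have "V $ i $ l - N * (\<Sum>j | \<iota> i = Suc (\<iota> j). V $ j $ l) = mat 1 $ i $ l" for i l
  proof (cases "\<iota> i")
    case 0
    then show ?thesis
      using inj[of l i] by (auto simp: V_def radix_mat_def mat_def)
  next
    case (Suc k)
    then have "k \<in> \<iota> ` UNIV"
      using \<iota> bij_betw_apply[OF \<iota>, of i] by (simp add: bij_betw_def)
    then obtain p where p: "\<iota> p = k"
      by blast
    then have "{j. \<iota> i = Suc (\<iota> j)} = {p}"
      using Suc inj by auto
    moreover have "N ^ (Suc k - \<iota> l) = N * N ^ (k - \<iota> l)" if "\<iota> l \<le> k"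
      using that by (simp add: Suc_diff_le)
    ultimately show ?thesis
      using Suc p inj[of l i] by (auto simp: V_def radix_mat_def mat_def)
  qed
  ultimately show ?thesis
    by (simp add: vec_eq_iff V_def)
qed

lemma radix_mat_mult_vec:
  fixes \<iota> :: "'n::finite \<Rightarrow> nat"
  assumes \<iota>: "bij_betw \<iota> UNIV {..<CARD('n)}"
  shows "(radix_mat N \<iota> *v v) $ i = radix_sum N (\<lambda>t. v $ inv \<iota> t) (\<iota> i)"
proof -
  define g where "g t = (if t \<le> \<iota> i then N ^ (\<iota> i - t) * v $ inv \<iota> t else 0)" for t
  have "inv \<iota> (\<iota> j) = j" for j
    using \<iota> by (simp add: bij_betw_def)
  then have "(radix_mat N \<iota> *v v) $ i = (\<Sum>j\<in>UNIV. g (\<iota> j))"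
    by (simp add: radix_mat_def matrix_vector_mult_def g_def if_distrib[of "\<lambda>x. x * _"] cong: if_cong)
  also have "\<dots> = sum g {..<CARD('n)}"
    by (rule sum.reindex_bij_betw[OF \<iota>])
  also have "\<dots> = sum g {..\<iota> i}"
    using bij_betw_apply[OF \<iota>, of i] by (intro sum.mono_neutral_right) (auto simp: g_def)
  finally show ?thesis
    by (simp add: radix_sum_def g_def)
qed

lemma radix_mat_mult_vec_sign:
  fixes \<iota> :: "'n::finite \<Rightarrow> nat"
  assumes \<iota>: "bij_betw \<iota> UNIV {..<CARD('n)}"
    and "N \<in> \<int>" "int_vec v" "\<And>j. \<bar>v $ j\<bar> < N"
  shows "nonneg_vec (radix_mat N \<iota> *v v) \<or> nonneg_vec (- (radix_mat N \<iota> *v v))"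
proof -
  have "\<iota> i \<le> CARD('n) - 1" for i
    using bij_betw_apply[OF \<iota>, of i] by simp
  moreover have "(\<forall>t\<le>CARD('n) - 1. radix_sum N (\<lambda>t. v $ inv \<iota> t) t \<ge> 0)
      \<or> (\<forall>t\<le>CARD('n) - 1. radix_sum N (\<lambda>t. v $ inv \<iota> t) t \<le> 0)"
    using assms(2-4) by (intro radix_sum_same_sign) (auto simp: int_vec_def)
  ultimately show ?thesis
    by (auto simp: nonneg_vec_def radix_mat_mult_vec[OF \<iota>])
qed

context
  fixes Q U V :: "real^'n^'n"
  assumes perfect: "classically_perfect Q"
    and right_inverse: "U ** V = mat 1"
    and int_U: "int_mat U" and int_V: "int_mat V"
    and sign: "\<And>v. v \<in> Min_class Q \<Longrightarrow> nonneg_vec (V *v v) \<or> nonneg_vec (- (V *v v))"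
begin

lemma left_inverse: "V ** U = mat 1"
  using right_inverse matrix_left_right_inverse by blast

lemma Min_class_sign_normalized:
  assumes "v \<in> Min_class Q"
  obtains w where "w = V *v v \<or> w = - (V *v v)" "int_vec w" "nonneg_vec w" "w \<noteq> 0"
    "qform (transpose U ** Q ** U) w = min_class Q"
proof -
  have "v \<noteq> 0"
    using assms classically_perfect_min_class(2)[OF perfect] by (auto simp: Min_class_def)
  then have "V *v v \<noteq> 0"
    by (metis right_inverse matrix_vector_mul_assoc matrix_vector_mul_lid matrix_vector_mult_0_right)
  moreover have "qform (transpose U ** Q ** U) (V *v v) = min_class Q"
    using assms by (simp add: qform_congruence matrix_vector_mul_assoc right_inverse Min_class_def)
  moreover have "int_vec (V *v v)"
    using assms int_V by (simp add: Min_class_def int_vec_matrix_vector_mult)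
  ultimately show ?thesis
    using sign[OF assms] that[of "V *v v"] that[of "- (V *v v)"] by (auto intro: int_vec_uminus)
qed

lemma min_COP_congruence: "min_COP (transpose U ** Q ** U) = min_class Q"
  unfolding min_COP_def
proof (rule cInf_eq_minimum)
  obtain v where "v \<in> Min_class Q"
    using classically_perfect_min_class(1)[OF perfect] by blast
  then obtain w where "int_vec w" "nonneg_vec w" "w \<noteq> 0" "qform (transpose U ** Q ** U) w = min_class Q"
    by (rule Min_class_sign_normalized)
  then show "min_class Q \<in> {qform (transpose U ** Q ** U) w |w. int_vec w \<and> nonneg_vec w \<and> w \<noteq> 0}"
    by (metis (mono_tags, lifting) mem_Collect_eq)
next
  fix x
  assume "x \<in> {qform (transpose U ** Q ** U) w |w. int_vec w \<and> nonneg_vec w \<and> w \<noteq> 0}"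
  then obtain w where w: "x = qform Q (U *v w)" "int_vec w" "w \<noteq> 0"
    by (auto simp: qform_congruence)
  have "U *v w \<noteq> 0"
    using w(3) by (metis left_inverse matrix_vector_mul_assoc matrix_vector_mul_lid matrix_vector_mult_0_right)
  then show "min_class Q \<le> x"
    using w by (simp add: min_class_le classically_perfect_imp_pos_def[OF perfect] int_vec_matrix_vector_mult int_U)
qed

lemma perfect_copositive_congruence: "perfect_copositive (transpose U ** Q ** U)"
  unfolding perfect_copositive_def
proof (intro conjI allI impI)
  show "strictly_copositive (transpose U ** Q ** U)"
  proof (rule pos_def_imp_strictly_copositive, rule pos_def_congruence)
    show "invertible U"
      using right_inverse left_inverse invertible_def by blast
  qed (rule classically_perfect_imp_pos_def[OF perfect])
next
  fix R :: "real^'n^'n"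
  assume R: "symmetric_mat R \<and> (\<forall>w\<in>Min_COP (transpose U ** Q ** U). qform R w = min_COP (transpose U ** Q ** U))"
  have "qform (transpose V ** R ** V) v = min_class Q" if v: "v \<in> Min_class Q" for v
  proof -
    obtain w where w: "w = V *v v \<or> w = - (V *v v)" "int_vec w" "nonneg_vec w"
      "qform (transpose U ** Q ** U) w = min_class Q"
      by (rule Min_class_sign_normalized[OF v])
    then have "w \<in> Min_COP (transpose U ** Q ** U)"
      by (simp add: Min_COP_def min_COP_congruence)
    then have "qform R w = min_class Q"
      using R by (simp add: min_COP_congruence)
    then show ?thesis
      using w(1) by (auto simp: qform_congruence)
  qed
  then have "transpose V ** R ** V = Q"
    using perfect R by (simp add: classically_perfect_def symmetric_mat_congruence)
  then have "transpose U ** Q ** U = transpose U ** (transpose V ** R ** V) ** U"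
    by simp
  also have "\<dots> = transpose (V ** U) ** R ** (V ** U)"
    by (simp add: matrix_transpose_mul matrix_mul_assoc)
  finally show "R = transpose U ** Q ** U"
    by (simp add: left_inverse)
qed

end

theorem theorem6p1:
  fixes Q :: "real^'n^'n"
  assumes "classically_perfect Q"
  shows "\<exists>U. GL_Z U \<and> perfect_copositive (transpose U ** Q ** U)"
proof -
  obtain B where B: "\<And>v. qform Q v \<le> min_class Q \<Longrightarrow> norm v \<le> B"
    using pos_def_bounded_sublevel[OF classically_perfect_imp_pos_def[OF assms]] by blast
  define N :: real where "N = of_int (\<lceil>B\<rceil> + 1)"
  have N: "N \<in> \<int>"
    by (simp add: N_def)
  have N_bound: "\<bar>v $ j\<bar> < N" if "v \<in> Min_class Q" for v j
  proof -
    have "\<bar>v $ j\<bar> \<le> B"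
      using B[of v] that component_le_norm_cart[of v j] by (force simp: Min_class_def)
    then show ?thesis
      using le_of_int_ceiling[of B] unfolding N_def by linarith
  qed
  obtain \<iota> :: "'n \<Rightarrow> nat" where \<iota>: "bij_betw \<iota> UNIV {..<CARD('n)}"
    using ex_bij_betw_finite_nat[of "UNIV :: 'n set"] by (auto simp: atLeast0LessThan)
  define U where "U = radix_mat_inverse N \<iota>"
  define V where "V = radix_mat N \<iota>"
  have "U ** V = mat 1" "int_mat U" "int_mat V"
    using radix_mat_inverse_mult[OF \<iota>] int_mat_radix_mat int_mat_radix_mat_inverse N
    by (auto simp: U_def V_def)
  moreover have "nonneg_vec (V *v v) \<or> nonneg_vec (- (V *v v))" if "v \<in> Min_class Q" for v
    unfolding V_def using \<iota> N N_bound that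
    by (intro radix_mat_mult_vec_sign) (auto simp: Min_class_def)
  ultimately show ?thesis
    using assms by (blast intro: GL_Z_if_int_inverse perfect_copositive_congruence)
qed

end
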